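(* Let $G$ be a finitely generated free abelian group and $g,h\in G$ such that the subgroup $\langle g,h\rangle$ has rank $2$. Then for any choice of signs, $1\pm g$ and $1\pm h$ are relatively prime in the group ring $\mathbb{Z}[G]$.
   Context: $\mathbb{Z}[G]$ is the integral group ring of $G$ (a unique factorization domain); relatively prime means having no common non-unit factor. *)

theory Defs
  imports "HOL-Analysis.Analysis" "HOL-Library.Poly_Mapping"
begin

text \<open>The finitely generated free abelian group is modelled as \<open>int ^ 'n\<close> (written additively),
  \<open>'n\<close> an arbitrary finite index type. The integral group ring \<open>\<int>[G]\<close> is the ring of finitely
  supported functions \<open>G \<Rightarrow>\<^sub>0 int\<close> with convolution product (library \<open>poly_mapping\<close>).\<close>

type_synonym 'n grp_ring = "(int ^ 'n) \<Rightarrow>\<^sub>0 int"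

definition grp_elem :: "int ^ 'n \<Rightarrow> 'n grp_ring" where
  "grp_elem g = Poly_Mapping.single g 1"

text \<open>The subgroup generated by \<open>g, h\<close> has rank 2 iff \<open>g, h\<close> are \<int>-linearly independent.\<close>
definition rank2_pair :: "int ^ 'n \<Rightarrow> int ^ 'n \<Rightarrow> bool" where
  "rank2_pair g h \<longleftrightarrow> (\<forall>a b :: int. a *s g + b *s h = 0 \<longrightarrow> a = 0 \<and> b = 0)"

text \<open>Relatively prime: no common non-unit factor (the library's \<open>coprime\<close> needs
  \<open>algebraic_semidom\<close>, which \<open>poly_mapping\<close> is not registered as).\<close>
definition rel_prime :: "'a::comm_semiring_1 \<Rightarrow> 'a \<Rightarrow> bool" where
  "rel_prime a b \<longleftrightarrow> (\<forall>c. c dvd a \<longrightarrow> c dvd b \<longrightarrow> c dvd 1)"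

end

theory Submission
  imports Defs "HOL-Library.List_Lexorder"
begin

text \<open>Let \<open>c\<close> divide both \<open>1 \<plusminus> g\<close> and \<open>1 \<plusminus> h\<close>. Refining a linear functional \<open>\<phi>\<close> on the group to a
  translation-invariant total order, the \<open>\<phi>\<close>-maximal and the \<open>\<phi>\<close>-minimal terms of a product are
  products of such terms of the factors, so from \<open>c * u = 1 \<plusminus> g\<close> and \<open>\<phi> g = 0\<close> it follows that
  \<open>\<phi>\<close> is constant on the support of \<open>c\<close>. The functionals vanishing on \<open>g\<close> or on \<open>h\<close> separate points
  because \<open>g\<close> and \<open>h\<close> are independent, hence \<open>c\<close> is a single term \<open>m x\<close>, and comparing constant terms
  in \<open>c * u = 1 \<plusminus> g\<close> shows that \<open>m\<close> is a unit.\<close>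

definition translation_invariant_embedding :: "('a::plus \<Rightarrow> 'b::linorder) \<Rightarrow> bool" where
  "translation_invariant_embedding K \<longleftrightarrow> inj K \<and> (\<forall>a b c. K a < K b \<longrightarrow> K (a + c) < K (b + c))"

lemma translation_invariant_embedding_add_less:
  fixes K :: "'a::ab_semigroup_add \<Rightarrow> 'b::linorder"
  assumes K: "translation_invariant_embedding K"
    and "K a \<le> K a0" "K b \<le> K b0" "(a, b) \<noteq> (a0, b0)"
  shows "K (a + b) < K (a0 + b0)"
proof -
  have less: "K x < K y \<Longrightarrow> K (z + x) < K (z + y)" for x y z
    using K by (simp add: translation_invariant_embedding_def add.commute)
  have le_less: "K x \<le> K y \<Longrightarrow> x \<noteq> y \<Longrightarrow> K x < K y" for x y
    using K by (metis translation_invariant_embedding_def injD order_le_less)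
  show ?thesis
  proof (cases "a = a0")
    case True
    then show ?thesis using assms le_less less by simp
  next
    case False
    then have "K (b + a) < K (b + a0)" using assms le_less less by blast
    moreover have "K (a0 + b) \<le> K (a0 + b0)"
      using assms le_less less by (cases "b = b0") (auto intro: less_imp_le)
    ultimately show ?thesis by (simp add: add.commute)
  qed
qed

lemma lookup_mult_pairs:
  "Poly_Mapping.lookup (f * g) k =
     (\<Sum>(a, b). Poly_Mapping.lookup f a * Poly_Mapping.lookup g b when k = a + b)"
  by transfer (simp add: prod_fun_unfold_prod)

lemma lookup_mult_at_max_keys:
  fixes K :: "'a::comm_monoid_add \<Rightarrow> 'b::linorder" and f g :: "'a \<Rightarrow>\<^sub>0 'c::semiring_0"
  assumes K: "translation_invariant_embedding K"
    and a0: "\<forall>a\<in>Poly_Mapping.keys f. K a \<le> K a0" and b0: "\<forall>b\<in>Poly_Mapping.keys g. K b \<le> K b0"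
  shows "Poly_Mapping.lookup (f * g) (a0 + b0) = Poly_Mapping.lookup f a0 * Poly_Mapping.lookup g b0"
proof -
  have "(\<Sum>(a, b). Poly_Mapping.lookup f a * Poly_Mapping.lookup g b when a0 + b0 = a + b)
      = (\<Sum>ab. (case ab of (a, b) \<Rightarrow> Poly_Mapping.lookup f a * Poly_Mapping.lookup g b) when (a0, b0) = ab)"
  proof (rule Sum_any.cong, clarify)
    fix a b
    show "(Poly_Mapping.lookup f a * Poly_Mapping.lookup g b when a0 + b0 = a + b) =
          (Poly_Mapping.lookup f a * Poly_Mapping.lookup g b when (a0, b0) = (a, b))"
    proof (cases "a \<in> Poly_Mapping.keys f \<and> b \<in> Poly_Mapping.keys g")
      case True
      then have "(a, b) \<noteq> (a0, b0) \<Longrightarrow> a0 + b0 \<noteq> a + b"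
        using translation_invariant_embedding_add_less[OF K] a0 b0 by (metis order_less_irrefl)
      then show ?thesis by (auto simp: when_def)
    next
      case False
      then show ?thesis by (auto simp: when_def in_keys_iff)
    qed
  qed
  then show ?thesis by (simp add: lookup_mult_pairs)
qed

lemma map2_plus_less_right:
  fixes xs ys zs :: "'a::ordered_cancel_ab_semigroup_add list"
  shows "length xs = length zs \<Longrightarrow> length ys = length zs \<Longrightarrow> xs < ys \<Longrightarrow>
    map2 (+) xs zs < map2 (+) ys zs"
proof (induction xs arbitrary: ys zs)
  case Nil
  then show ?case by simp
next
  case (Cons x xs)
  then obtain y ys' z zs' where "ys = y # ys'" "zs = z # zs'"
    by (metis length_Suc_conv)
  then show ?case using Cons by (auto simp: add_strict_right_mono)
qed

lemma translation_invariant_embedding_lex: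
  fixes \<phi> :: "int ^ 'n \<Rightarrow> int" and xs :: "'n list"
  assumes additive: "\<And>a b. \<phi> (a + b) = \<phi> a + \<phi> b" and xs: "set xs = UNIV"
  shows "translation_invariant_embedding (\<lambda>v. \<phi> v # map (($) v) xs)"
    (is "translation_invariant_embedding ?K")
  unfolding translation_invariant_embedding_def
proof safe
  show "inj ?K"
    using xs by (intro injI) (auto simp: vec_eq_iff map_eq_conv)
  fix a b c :: "int ^ 'n"
  assume "?K a < ?K b"
  moreover have "?K (v + c) = map2 (+) (?K v) (?K c)" for v
    by (simp add: additive map2_map_map)
  ultimately show "?K (a + c) < ?K (b + c)"
    using map2_plus_less_right[of "?K a" "?K c" "?K b"] by (simp only:) simp
qed

lemma additive_max_in_keys_mult:
  fixes \<phi> :: "int ^ 'n \<Rightarrow> int" and f g :: "int ^ 'n \<Rightarrow>\<^sub>0 'c::semiring_no_zero_divisors"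
  assumes additive: "\<And>a b. \<phi> (a + b) = \<phi> a + \<phi> b" and "f \<noteq> 0" "g \<noteq> 0"
  shows "\<exists>a\<in>Poly_Mapping.keys f. \<exists>b\<in>Poly_Mapping.keys g. a + b \<in> Poly_Mapping.keys (f * g) \<and>
    (\<forall>x\<in>Poly_Mapping.keys f. \<phi> x \<le> \<phi> a) \<and> (\<forall>y\<in>Poly_Mapping.keys g. \<phi> y \<le> \<phi> b)"
proof -
  obtain xs :: "'n list" where "set xs = UNIV" using finite_list[of "UNIV :: 'n set"] by auto
  define K where "K v = \<phi> v # map (($) v) xs" for v
  have K: "translation_invariant_embedding K"
    unfolding K_def using translation_invariant_embedding_lex[OF additive \<open>set xs = UNIV\<close>] .
  have \<phi>_le: "K x \<le> K y \<Longrightarrow> \<phi> x \<le> \<phi> y" for x y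
    by (auto simp: K_def)
  have max: "\<exists>a\<in>Poly_Mapping.keys p. \<forall>x\<in>Poly_Mapping.keys p. K x \<le> K a"
    if "p \<noteq> 0" for p :: "int ^ 'n \<Rightarrow>\<^sub>0 'c"
  proof -
    have "Max (K ` Poly_Mapping.keys p) \<in> K ` Poly_Mapping.keys p"
      using that by (intro Max_in) auto
    then obtain a where "a \<in> Poly_Mapping.keys p" "K a = Max (K ` Poly_Mapping.keys p)"
      by (metis imageE)
    then show ?thesis by (metis Max_ge finite_imageI finite_keys image_eqI)
  qed
  obtain a b where a: "a \<in> Poly_Mapping.keys f" "\<forall>x\<in>Poly_Mapping.keys f. K x \<le> K a"
    and b: "b \<in> Poly_Mapping.keys g" "\<forall>y\<in>Poly_Mapping.keys g. K y \<le> K b"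
    using max \<open>f \<noteq> 0\<close> \<open>g \<noteq> 0\<close> by meson
  have "a + b \<in> Poly_Mapping.keys (f * g)"
    using lookup_mult_at_max_keys[OF K a(2) b(2)] a(1) b(1) by (simp add: in_keys_iff)
  then show ?thesis using a b \<phi>_le by blast
qed

lemma additive_constant_on_keys_dvd:
  fixes \<phi> :: "int ^ 'n \<Rightarrow> int" and c p :: "int ^ 'n \<Rightarrow>\<^sub>0 'c::{comm_semiring_1, semiring_no_zero_divisors}"
  assumes additive: "\<And>a b. \<phi> (a + b) = \<phi> a + \<phi> b"
    and "c dvd p" "p \<noteq> 0" and vanish: "\<forall>z\<in>Poly_Mapping.keys p. \<phi> z = 0"
    and x: "x \<in> Poly_Mapping.keys c" and y: "y \<in> Poly_Mapping.keys c"
  shows "\<phi> x = \<phi> y"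
proof -
  obtain u where p: "p = c * u" using \<open>c dvd p\<close> by (rule dvdE)
  then have "c \<noteq> 0" "u \<noteq> 0" using \<open>p \<noteq> 0\<close> by auto
  obtain a b where ab: "a \<in> Poly_Mapping.keys c" "b \<in> Poly_Mapping.keys u" "a + b \<in> Poly_Mapping.keys p"
    and a_max: "\<forall>x\<in>Poly_Mapping.keys c. \<phi> x \<le> \<phi> a" and b_max: "\<forall>y\<in>Poly_Mapping.keys u. \<phi> y \<le> \<phi> b"
    using additive_max_in_keys_mult[OF additive \<open>c \<noteq> 0\<close> \<open>u \<noteq> 0\<close>] p by blast
  have additive_neg: "- \<phi> (a + b) = - \<phi> a + - \<phi> b" for a b by (simp add: additive)
  obtain a' b' where ab': "a' \<in> Poly_Mapping.keys c" "b' \<in> Poly_Mapping.keys u" "a' + b' \<in> Poly_Mapping.keys p"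
    and a'_min: "\<forall>x\<in>Poly_Mapping.keys c. - \<phi> x \<le> - \<phi> a'"
    and b'_min: "\<forall>y\<in>Poly_Mapping.keys u. - \<phi> y \<le> - \<phi> b'"
    using additive_max_in_keys_mult[OF additive_neg \<open>c \<noteq> 0\<close> \<open>u \<noteq> 0\<close>] p by blast
  have "\<phi> (a + b) = 0" "\<phi> (a' + b') = 0"
    using vanish ab(3) ab'(3) by blast+
  then have "\<phi> a + \<phi> b = 0" "\<phi> a' + \<phi> b' = 0" by (simp_all only: additive)
  moreover have "\<phi> a' \<le> \<phi> a" "\<phi> b' \<le> \<phi> b"
    using a'_min ab(1) b'_min ab(2) by force+
  ultimately have "\<phi> a = \<phi> a'" by linarith
  then show ?thesis using a_max a'_min x y by (metis neg_le_iff_le order_antisym)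
qed

lemma rank2_pair_nonzero:
  assumes "rank2_pair g h"
  shows "g \<noteq> 0" and "h \<noteq> 0"
proof -
  have "(1::int) *s g + 0 *s h \<noteq> 0" "(0::int) *s g + 1 *s h \<noteq> 0"
    using assms unfolding rank2_pair_def by (metis one_neq_zero)+
  then show "g \<noteq> 0" "h \<noteq> 0" by auto
qed

lemma rank2_pair_parallel_eq_0:
  fixes g h d :: "int ^ 'n"
  assumes rk: "rank2_pair g h"
    and g: "\<And>i j. g$i * d$j = g$j * d$i" and h: "\<And>i j. h$i * d$j = h$j * d$i"
  shows "d = 0"
proof (rule ccontr)
  assume "d \<noteq> 0"
  then obtain i where di: "d$i \<noteq> 0" by (auto simp: vec_eq_iff)
  have "(h$i) *s g + (- g$i) *s h = 0"
  proof (subst vec_eq_iff, intro allI)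
    fix j
    have "d$i * (h$i * g$j - g$i * h$j) = h$i * (g$i * d$j) - g$i * (h$i * d$j)"
      using g[of i j] h[of i j] by (simp add: algebra_simps)
    then have "h$i * g$j - g$i * h$j = 0" using di by (simp add: algebra_simps)
    then show "((h$i) *s g + (- g$i) *s h) $ j = 0 $ j" by simp
  qed
  then have "g$i = 0" using rk unfolding rank2_pair_def by (metis neg_equal_0_iff_equal)
  then have "g = 0" using di g[of i] by (auto simp: vec_eq_iff)
  with rank2_pair_nonzero(1)[OF rk] show False by contradiction
qed

lemma keys_one_plus_single: "Poly_Mapping.keys (1 + Poly_Mapping.single g s) \<subseteq> {0, g}"
  using keys_add[of 1 "Poly_Mapping.single g s"] by (auto split: if_splits)

lemma lookup_one_plus_single_0:
  "g \<noteq> 0 \<Longrightarrow> Poly_Mapping.lookup (1 + Poly_Mapping.single g s) 0 = 1"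
  by (simp add: lookup_add lookup_single_not_eq)

lemma dvd_one_plus_single_keys_parallel:
  fixes c :: "int ^ 'n \<Rightarrow>\<^sub>0 'c::idom" and g :: "int ^ 'n"
  assumes "g \<noteq> 0" "c dvd 1 + Poly_Mapping.single g s"
    and "x \<in> Poly_Mapping.keys c" "y \<in> Poly_Mapping.keys c"
  shows "g$i * (x - y)$j = g$j * (x - y)$i"
proof -
  define \<phi> where "\<phi> w = g$i * w$j - g$j * w$i" for w :: "int ^ 'n"
  have "\<phi> (a + b) = \<phi> a + \<phi> b" for a b by (simp add: \<phi>_def algebra_simps)
  moreover have "1 + Poly_Mapping.single g s \<noteq> 0"
    using lookup_one_plus_single_0[OF \<open>g \<noteq> 0\<close>] by (metis lookup_zero zero_neq_one)
  moreover have "\<forall>z\<in>Poly_Mapping.keys (1 + Poly_Mapping.single g s). \<phi> z = 0"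
    using keys_one_plus_single by (force simp: \<phi>_def mult.commute)
  ultimately have "\<phi> x = \<phi> y" using additive_constant_on_keys_dvd assms(2-4) by blast
  then show ?thesis by (simp add: \<phi>_def algebra_simps)
qed

lemma single_dvd_one_if_dvd:
  fixes x :: "'a::ab_group_add" and m :: "'c::comm_ring_1"
  assumes "Poly_Mapping.single x m dvd p" "Poly_Mapping.lookup p 0 = 1"
  shows "Poly_Mapping.single x m dvd 1"
proof -
  obtain u where "p = Poly_Mapping.single x m * u" using assms(1) by (rule dvdE)
  also have "\<dots> = Poly_Mapping.single 0 m * (Poly_Mapping.single x 1 * u)"
    by (simp add: mult.assoc[symmetric] mult_single)
  finally have "Poly_Mapping.lookup p 0 = m * Poly_Mapping.lookup (Poly_Mapping.single x 1 * u) 0"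
    by (simp add: mult_map_scale_conv_mult[symmetric] Poly_Mapping.map.rep_eq when_def)
  then obtain k where "1 = m * k" using assms(2) by auto
  then have "Poly_Mapping.single x m * Poly_Mapping.single (- x) k = 1"
    by (simp add: mult_single)
  then show ?thesis by (metis dvdI)
qed

lemma keys_subset_singleton_eq_single:
  "Poly_Mapping.keys c \<subseteq> {x} \<Longrightarrow> c = Poly_Mapping.single x (Poly_Mapping.lookup c x)"
  by (rule poly_mapping_eqI) (auto simp: lookup_single in_keys_iff when_def)

lemma one_plus_of_int_grp_elem:
  "1 + of_int s * grp_elem g = 1 + Poly_Mapping.single g s"
  by (metis grp_elem_def mult_single single_of_int add_0 mult.right_neutral of_int_eq_id id_apply)

theorem mainTheorem17:
  fixes g h :: "int ^ 'n" and s t :: int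
  assumes "rank2_pair g h"
    and "s \<in> {1, -1}" and "t \<in> {1, -1}"
  shows "rel_prime (1 + of_int s * grp_elem g) (1 + of_int t * grp_elem h)"
  unfolding rel_prime_def one_plus_of_int_grp_elem
proof (intro allI impI)
  fix c :: "'n grp_ring"
  assume cg: "c dvd 1 + Poly_Mapping.single g s" and ch: "c dvd 1 + Poly_Mapping.single h t"
  note nonzero = rank2_pair_nonzero[OF \<open>rank2_pair g h\<close>]
  have "x = y" if "x \<in> Poly_Mapping.keys c" "y \<in> Poly_Mapping.keys c" for x y
  proof -
    have "x - y = 0"
      by (rule rank2_pair_parallel_eq_0[OF \<open>rank2_pair g h\<close>
            dvd_one_plus_single_keys_parallel[OF nonzero(1) cg that]
            dvd_one_plus_single_keys_parallel[OF nonzero(2) ch that]])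
    then show ?thesis by simp
  qed
  then obtain x where "Poly_Mapping.keys c \<subseteq> {x}" by blast
  then have "c = Poly_Mapping.single x (Poly_Mapping.lookup c x)"
    by (rule keys_subset_singleton_eq_single)
  then show "c dvd 1"
    using single_dvd_one_if_dvd cg lookup_one_plus_single_0[OF nonzero(1)] by metis
qed

end
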